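(* For every $n\ge9$ we have $\tilde b(TC_n)\le 2^{n/4}(2^{-1/2}+2^{-1/4})$.
   Context: The triangular cycle $TC_n$ is the graph with vertex set $[n]$ in which $i\ne j$ are adjacent iff $i-j\pmod n\in\{n-2,n-1,1,2\}$. $\mathrm{Ind}(G)$ is the independence complex of $G$ (including the empty face), and $\tilde b(G)=\sum_{i\ge-1}\dim_{\mathbb{K}}\widetilde H_i(\mathrm{Ind}(G);\mathbb{K})$ for a fixed field $\mathbb{K}$. *)

theory Defs
  imports Complex_Main "HOL-Library.Function_Algebras"
begin

definition Ind :: "'a set \<Rightarrow> ('a \<Rightarrow> 'a \<Rightarrow> bool) \<Rightarrow> 'a set set" where
  "Ind V E = {\<sigma>. \<sigma> \<subseteq> V \<and> (\<forall>u\<in>\<sigma>. \<forall>v\<in>\<sigma>. \<not> E u v)}"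

definition chain_scale :: "'k::field \<Rightarrow> ('a set \<Rightarrow> 'k) \<Rightarrow> ('a set \<Rightarrow> 'k)" where
  "chain_scale a c = (\<lambda>\<sigma>. a * c \<sigma>)"

text \<open>Simplicial k-chains with coefficients in the field 'k; index k is the
  number of vertices of a face (so k = 0 is the empty face, i.e. dimension -1,
  giving the augmented complex used for reduced homology).\<close>
definition chains :: "'k::field itself \<Rightarrow> 'a set set \<Rightarrow> nat \<Rightarrow> ('a set \<Rightarrow> 'k) set" where
  "chains _ \<Delta> k = {c. \<forall>\<sigma>. c \<sigma> \<noteq> 0 \<longrightarrow> \<sigma> \<in> \<Delta> \<and> card \<sigma> = k}"

definition bd :: "'a::linorder set \<Rightarrow> 'a set set \<Rightarrow> ('a set \<Rightarrow> 'k::field) \<Rightarrow> ('a set \<Rightarrow> 'k)" where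
  "bd V \<Delta> c = (\<lambda>\<tau>. if \<tau> \<in> \<Delta> then
      (\<Sum>v\<in>V - \<tau>. if insert v \<tau> \<in> \<Delta>
          then (-1) ^ card {u\<in>\<tau>. u < v} * c (insert v \<tau>) else 0)
    else 0)"

definition cycles :: "'k::field itself \<Rightarrow> 'a::linorder set \<Rightarrow> 'a set set \<Rightarrow> nat \<Rightarrow> ('a set \<Rightarrow> 'k) set" where
  "cycles K V \<Delta> k = {c \<in> chains K \<Delta> k. bd V \<Delta> c = 0}"

definition boundaries :: "'k::field itself \<Rightarrow> 'a::linorder set \<Rightarrow> 'a set set \<Rightarrow> nat \<Rightarrow> ('a set \<Rightarrow> 'k) set" where
  "boundaries K V \<Delta> k = bd V \<Delta> ` chains K \<Delta> (Suc k)"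

text \<open>dim of reduced homology in degree k-1 (k = number of vertices of faces):
  dim Z - dim B.\<close>
definition reduced_betti :: "'k::field itself \<Rightarrow> 'a::linorder set \<Rightarrow> 'a set set \<Rightarrow> nat \<Rightarrow> nat" where
  "reduced_betti K V \<Delta> k =
     vector_space.dim (chain_scale :: 'k \<Rightarrow> _) (cycles K V \<Delta> k)
     - vector_space.dim (chain_scale :: 'k \<Rightarrow> _) (boundaries K V \<Delta> k)"

text \<open>Total reduced Betti number b~(G) = sum over i \<ge> -1 of dim H~_i(Ind G; K).
  Faces have at most card V vertices, so the sum is over k = 0..card V.\<close>
definition btilde :: "'k::field itself \<Rightarrow> 'a::linorder set \<Rightarrow> ('a \<Rightarrow> 'a \<Rightarrow> bool) \<Rightarrow> nat" where
  "btilde K V E = (\<Sum>k\<le>card V. reduced_betti K V (Ind V E) k)"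

definition TC_adj :: "nat \<Rightarrow> nat \<Rightarrow> nat \<Rightarrow> bool" where
  "TC_adj n i j = (i \<noteq> j \<and> (int i - int j) mod int n \<in> {int n - 2, int n - 1, 1, 2})"

end

theory Submission
  imports Defs
begin

text \<open>
  For a vertex \<open>v\<close> of \<open>G\<close>, the chains of \<open>Ind G\<close> split into those avoiding \<open>v\<close>, which form
  the chain complex of \<open>Ind (G - v)\<close>, and those on faces containing \<open>v\<close>, which after removing
  \<open>v\<close> form the chain complex of \<open>Ind (G - N[v])\<close> shifted by one. Comparing dimensions of
  chains and boundaries degreewise along this short exact sequence gives
  \<open>b~(G) \<le> b~(G - v) + b~(G - N[v])\<close>; and \<open>b~(G) = 0\<close> when \<open>G\<close> has an isolated vertex,
  since then \<open>Ind G\<close> is a cone.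

  For the square of a path on \<open>m\<close> vertices, splitting at the second vertex and then at the
  third (after which the first vertex is isolated) gives \<open>b~ \<le> g m\<close> with
  \<open>g m = g (m - 4) + g (m - 5)\<close>, and \<open>g m \<le> 2 * 2 ^ ((m - 4) / 4) = 2 ^ (m / 4)\<close> by induction. In
  \<open>TC n\<close>, deleting \<open>n\<close> and then \<open>1\<close> leaves squares of paths on \<open>n - 2\<close>, \<open>n - 5\<close> and \<open>n - 5\<close>
  vertices, so \<open>b~(TC n) \<le> 2 ^ ((n - 2) / 4) + 2 * 2 ^ ((n - 5) / 4)\<close>.
\<close>

section \<open>Dimensions of finitely spanned subspaces\<close>

context vector_space begin

lemma finite_basis_exists:
  assumes W: "finite W" "S \<subseteq> span W"
  obtains B where "B \<subseteq> S" "independent B" "S \<subseteq> span B" "finite B" "card B = dim S"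
proof -
  obtain B where B: "B \<subseteq> S" "independent B" "S \<subseteq> span B" "card B = dim S"
    by (rule basis_exists)
  have "finite B"
    using independent_span_bound[OF W(1) B(2)] B(1) W(2) by blast
  with B that show ?thesis by blast
qed

lemma dim_mono_finite_span:
  assumes "S \<subseteq> T" "finite W" "T \<subseteq> span W"
  shows "dim S \<le> dim T"
proof -
  obtain B where B: "B \<subseteq> T" "independent B" "T \<subseteq> span B" "finite B" "card B = dim T"
    using finite_basis_exists[OF assms(2,3)] by blast
  then show ?thesis
    using dim_le_card[of S B] assms(1) by auto
qed

lemma dim_subset_zero: "S \<subseteq> {0} \<Longrightarrow> dim S = 0"
  using dim_le_card[of S "{}"] by auto

lemma span_disjoint_subsets_inter:
  assumes "independent B" "X \<subseteq> B" "Y \<subseteq> B" "X \<inter> Y = {}" "x \<in> span X" "x \<in> span Y"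
  shows "x = 0"
proof -
  have rx: "representation B x = representation X x"
    by (rule representation_extend) (use assms in auto)
  have ry: "representation B x = representation Y x"
    by (rule representation_extend) (use assms in auto)
  have "\<forall>b. representation B x b = 0"
    using representation_ne_zero[of X x] representation_ne_zero[of Y x] rx ry assms(4)
    by (metis disjoint_iff)
  then have "{b. representation B x b \<noteq> 0} = {}"
    by auto
  moreover have "x \<in> span B"
    using assms span_mono by blast
  ultimately show ?thesis
    using sum_nonzero_representation_eq[OF assms(1)] by force
qed

lemma linear_inj_on_span_complement:
  assumes lf: "Vector_Spaces.linear scale scale f" and B: "independent B" "N \<subseteq> B"
    and ker: "\<And>x. x \<in> span B \<Longrightarrow> f x = 0 \<Longrightarrow> x \<in> span N"
  shows "inj_on f (span (B - N))"
proof -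
  interpret lf: Vector_Spaces.linear scale scale f by fact
  have "x = 0" if x: "x \<in> span (B - N)" "f x = 0" for x
  proof -
    have "x \<in> span B"
      using x(1) span_mono[of "B - N" B] by blast
    then have "x \<in> span N"
      using ker x(2) by blast
    then show ?thesis
      using span_disjoint_subsets_inter[OF B(1), of "B - N" N x] x(1) B(2) by auto
  qed
  then show ?thesis
    using lf.inj_on_iff_eq_0[OF subspace_span] by blast
qed

lemma linear_image_span_complement:
  assumes lf: "Vector_Spaces.linear scale scale f" and N: "\<And>x. x \<in> N \<Longrightarrow> f x = 0"
  shows "f ` span B = span (f ` (B - N))"
proof -
  interpret lf: Vector_Spaces.linear scale scale f by fact
  have "f ` B \<subseteq> span (f ` (B - N))"
  proof
    fix y assume "y \<in> f ` B"
    then obtain b where b: "b \<in> B" "y = f b" by auto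
    show "y \<in> span (f ` (B - N))"
    proof (cases "b \<in> N")
      case True
      then show ?thesis using b N span_zero by simp
    next
      case False
      then show ?thesis using b span_base by auto
    qed
  qed
  moreover have "f ` (B - N) \<subseteq> span (f ` B)"
    using span_superset by blast
  ultimately have "span (f ` B) = span (f ` (B - N))"
    by (simp only: span_eq)
  then show ?thesis
    using lf.span_image by simp
qed

lemma rank_nullity_finite_span:
  assumes lf: "Vector_Spaces.linear scale scale f" and S: "subspace S"
    and W: "finite W" "S \<subseteq> span W"
  shows "dim S = dim {x\<in>S. f x = 0} + dim (f ` S)"
proof -
  interpret lf: Vector_Spaces.linear scale scale f by fact
  let ?N = "{x\<in>S. f x = 0}"
  obtain BN where BN: "BN \<subseteq> ?N" "independent BN" "?N \<subseteq> span BN" "card BN = dim ?N"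
    by (rule basis_exists)
  obtain B where B: "BN \<subseteq> B" "B \<subseteq> S" "independent B" "S \<subseteq> span B"
    using maximal_independent_subset_extend[of BN S] BN by auto
  have fin: "finite B"
    using independent_span_bound[OF W(1) B(3)] B(2) W(2) by blast
  have spanB: "span B = S"
    using B S(1) span_minimal span_mono by (metis span_subspace)
  have inj: "inj_on f (span (B - BN))"
    by (rule linear_inj_on_span_complement[OF lf B(3,1)]) (use spanB BN(3) in auto)
  have "f ` S = span (f ` (B - BN))"
    using linear_image_span_complement[OF lf, of BN B] BN(1) spanB by auto
  then have "dim (f ` S) = card (f ` (B - BN))"
    using dim_span_eq_card_independent[OF lf.independent_injective_image[OF _ inj]]
      independent_mono[OF B(3)] by simp
  also have "\<dots> = card B - card BN"
    using card_image[OF inj_on_subset[OF inj span_superset]] fin B(1)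
    by (simp add: card_Diff_subset finite_subset)
  finally show ?thesis
    using basis_card_eq_dim[OF B(2,4,3)] BN(4) card_mono[OF fin B(1)] by simp
qed

lemma dim_inj_image_finite_span:
  assumes "Vector_Spaces.linear scale scale f" "subspace S" "finite W" "S \<subseteq> span W"
    and "\<And>x. x \<in> S \<Longrightarrow> f x = 0 \<Longrightarrow> x = 0"
  shows "dim (f ` S) = dim S"
proof -
  have "dim {x\<in>S. f x = 0} = 0"
    by (rule dim_subset_zero) (use assms(5) in auto)
  then show ?thesis
    using rank_nullity_finite_span[OF assms(1-4)] by simp
qed

end

section \<open>The vector space of chains\<close>

interpretation cs: vector_space "chain_scale :: 'k::field \<Rightarrow> ('a set \<Rightarrow> 'k) \<Rightarrow> ('a set \<Rightarrow> 'k)"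
  by unfold_locales (auto simp: chain_scale_def fun_eq_iff algebra_simps)

lemma chain_scale_apply [simp]: "chain_scale a c \<sigma> = a * c \<sigma>"
  by (simp add: chain_scale_def)

lemma sum_fun_apply: "(\<Sum>x\<in>A. f x) t = (\<Sum>x\<in>A. f x t)"
  by (induct A rule: infinite_finite_induct) auto

definition face_indicator :: "'a set \<Rightarrow> ('a set \<Rightarrow> 'k::field)" where
  "face_indicator \<sigma> = (\<lambda>\<tau>. if \<tau> = \<sigma> then 1 else 0)"

definition supported_on :: "'a set set \<Rightarrow> ('a set \<Rightarrow> 'k::field) set" where
  "supported_on F = {c. \<forall>\<sigma>. c \<sigma> \<noteq> 0 \<longrightarrow> \<sigma> \<in> F}"

lemma supported_on_span_indicators:
  assumes "finite F"
  shows "(supported_on F :: ('a set \<Rightarrow> 'k::field) set) \<subseteq> cs.span (face_indicator ` F)"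
proof
  fix c :: "'a set \<Rightarrow> 'k" assume c: "c \<in> supported_on F"
  have "c = (\<Sum>\<sigma>\<in>F. chain_scale (c \<sigma>) (face_indicator \<sigma>))"
  proof
    fix \<tau>
    show "c \<tau> = (\<Sum>\<sigma>\<in>F. chain_scale (c \<sigma>) (face_indicator \<sigma>)) \<tau>"
      unfolding sum_fun_apply using c assms
      by (auto simp: face_indicator_def supported_on_def if_distrib cong: if_cong)
  qed
  also have "\<dots> \<in> cs.span (face_indicator ` F)"
    by (intro cs.span_sum cs.span_scale cs.span_base) auto
  finally show "c \<in> cs.span (face_indicator ` F)" .
qed

lemma subset_span_indicators:
  "finite F \<Longrightarrow> S \<subseteq> supported_on F \<Longrightarrow> S \<subseteq> cs.span (face_indicator ` F)"
  using supported_on_span_indicators by blast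

lemma supported_on_mono: "F \<subseteq> G \<Longrightarrow> supported_on F \<subseteq> supported_on G"
  unfolding supported_on_def by auto

lemma chains_supported_on: "chains K \<Delta> k \<subseteq> supported_on \<Delta>"
  unfolding chains_def supported_on_def by auto

lemma subspace_chains: "cs.subspace (chains K \<Delta> k)"
  unfolding cs.subspace_def chains_def by auto (metis add.right_neutral)+

lemma linear_bd:
  "Vector_Spaces.linear chain_scale chain_scale (bd V \<Delta> :: ('a::linorder set \<Rightarrow> 'k::field) \<Rightarrow> _)"
  unfolding Vector_Spaces.linear_iff
  by (auto simp: cs.vector_space_axioms bd_def fun_eq_iff sum.distrib sum_distrib_left
      distrib_left algebra_simps if_distrib cong: if_cong)
     (subst sum.distrib[symmetric], auto intro!: sum.cong)

lemma bd_supported_on: "bd V \<Delta> c \<in> supported_on \<Delta>"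
  unfolding supported_on_def bd_def by auto

lemma subspace_linear_image:
  assumes "Vector_Spaces.linear chain_scale chain_scale (f :: ('a set \<Rightarrow> 'k::field) \<Rightarrow> _)"
    and "cs.subspace S"
  shows "cs.subspace (f ` S)"
  using module_hom.subspace_image[OF iffD2[OF module_hom_iff_linear assms(1)] assms(2)] .

lemma dim_cycles:
  assumes "finite \<Delta>"
  shows "cs.dim (cycles K V \<Delta> k) = cs.dim (chains K \<Delta> k) - cs.dim (bd V \<Delta> ` chains K \<Delta> k)"
  using cs.rank_nullity_finite_span[OF linear_bd[of V \<Delta>] subspace_chains[of K \<Delta> k]
      finite_imageI[OF assms] subset_span_indicators[OF assms chains_supported_on]]
  unfolding cycles_def by simp

lemma reduced_betti_eq:
  assumes "finite \<Delta>"
  shows "reduced_betti K V \<Delta> k = cs.dim (chains K \<Delta> k) - cs.dim (bd V \<Delta> ` chains K \<Delta> k)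
           - cs.dim (bd V \<Delta> ` chains K \<Delta> (Suc k))"
  using dim_cycles[OF assms, of K V k] unfolding reduced_betti_def boundaries_def by simp

section \<open>Independence complexes\<close>

lemma Ind_subset_Pow: "Ind V E \<subseteq> Pow V"
  unfolding Ind_def by auto

lemma finite_Ind: "finite V \<Longrightarrow> finite (Ind V E)"
  using Ind_subset_Pow finite_subset by (metis finite_Pow_iff)

lemma finite_face_Ind: "finite V \<Longrightarrow> \<sigma> \<in> Ind V E \<Longrightarrow> finite \<sigma>"
  unfolding Ind_def by (auto intro: finite_subset)

lemma Ind_downward_closed: "\<sigma> \<in> Ind V E \<Longrightarrow> \<tau> \<subseteq> \<sigma> \<Longrightarrow> \<tau> \<in> Ind V E"
  unfolding Ind_def by auto

lemma Ind_mono: "V' \<subseteq> V \<Longrightarrow> Ind V' E \<subseteq> Ind V E"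
  unfolding Ind_def by auto

lemma btilde_cong:
  assumes "\<And>x y. x \<in> V \<Longrightarrow> y \<in> V \<Longrightarrow> E x y = E' x y"
  shows "btilde K V E = btilde K V E'"
proof -
  have "Ind V E = Ind V E'"
    unfolding Ind_def using assms by blast
  then show ?thesis
    unfolding btilde_def by simp
qed

lemma reduced_betti_above_card:
  fixes K :: "'k::field itself" and V :: "'a::linorder set"
  assumes fin: "finite V" and k: "card V < k"
  shows "reduced_betti K V (Ind V E) k = 0"
proof -
  have "chains K (Ind V E) k \<subseteq> {0}"
  proof
    fix c :: "'a set \<Rightarrow> 'k" assume c: "c \<in> chains K (Ind V E) k"
    have "c \<sigma> = 0" for \<sigma>
    proof (rule ccontr)
      assume "c \<sigma> \<noteq> 0"
      then have "\<sigma> \<in> Ind V E" "card \<sigma> = k"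
        using c by (auto simp: chains_def)
      then have "card \<sigma> \<le> card V"
        using Ind_subset_Pow card_mono[OF fin] by blast
      then show False
        using \<open>card \<sigma> = k\<close> k by simp
    qed
    then show "c \<in> {0}" by auto
  qed
  then have "cs.dim (cycles K V (Ind V E) k) = 0"
    by (intro cs.dim_subset_zero) (auto simp: cycles_def)
  then show ?thesis
    unfolding reduced_betti_def by simp
qed

lemma btilde_eq_sum:
  fixes K :: "'k::field itself" and V :: "'a::linorder set"
  assumes "finite V" "card V \<le> m"
  shows "btilde K V E = (\<Sum>k\<le>m. reduced_betti K V (Ind V E) k)"
  unfolding btilde_def
  by (rule sum.mono_neutral_left) (use assms reduced_betti_above_card[OF assms(1), where K=K] in auto)

lemma btilde_empty_le:
  fixes K :: "'k::field itself" and E :: "'a::linorder \<Rightarrow> 'a \<Rightarrow> bool"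
  shows "btilde K {} E \<le> 1"
proof -
  have I: "Ind {} E = {{}}"
    unfolding Ind_def by auto
  have "cycles K {} (Ind {} E) 0 \<subseteq> supported_on (Ind {} E)"
    using chains_supported_on by (auto simp: cycles_def)
  then have "cycles K {} (Ind {} E) 0 \<subseteq> cs.span (face_indicator ` Ind {} E)"
    by (intro subset_span_indicators finite_Ind) simp
  then have "cs.dim (cycles K {} (Ind {} E) 0) \<le> card (face_indicator ` Ind {} E :: ('a set \<Rightarrow> 'k) set)"
    by (rule cs.dim_le_card) (simp add: I)
  also have "\<dots> \<le> 1"
    unfolding I by simp
  finally show ?thesis
    unfolding btilde_def reduced_betti_def by simp
qed

section \<open>Signs and cones\<close>

definition insertion_sign :: "'a::linorder set \<Rightarrow> 'a \<Rightarrow> 'k::field" where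
  "insertion_sign \<rho> v = (-1) ^ card {u\<in>\<rho>. u < v}"

lemma bd_eq_insertion_sign:
  "bd V \<Delta> c = (\<lambda>\<tau>. if \<tau> \<in> \<Delta> then
      (\<Sum>v\<in>V - \<tau>. if insert v \<tau> \<in> \<Delta> then insertion_sign \<tau> v * c (insert v \<tau>) else 0) else 0)"
  unfolding bd_def insertion_sign_def ..

lemma insertion_sign_insert:
  assumes "finite \<rho>" "w \<notin> \<rho>"
  shows "(insertion_sign (insert w \<rho>) v :: 'k::field)
           = (if w < v then - insertion_sign \<rho> v else insertion_sign \<rho> v)"
proof -
  have "{u\<in>insert w \<rho>. u < v} = (if w < v then insert w {u\<in>\<rho>. u < v} else {u\<in>\<rho>. u < v})"
    by auto
  then show ?thesis
    using assms by (auto simp: insertion_sign_def)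
qed

lemma insertion_sign_square [simp]: "(insertion_sign \<rho> v :: 'k::field) * insertion_sign \<rho> v = 1"
  by (simp add: insertion_sign_def power_mult_distrib[symmetric])

lemma insertion_sign_nonzero [simp]: "(insertion_sign \<rho> v :: 'k::field) \<noteq> 0"
  by (simp add: insertion_sign_def)

text \<open>For an isolated vertex \<open>w\<close>, \<open>cone_chain w\<close> is a contracting chain homotopy
  (\<open>bd_cone_chain\<close>); it is also inverse to \<open>link_chain w\<close> below.\<close>

definition cone_chain :: "'a \<Rightarrow> ('a::linorder set \<Rightarrow> 'k::field) \<Rightarrow> ('a set \<Rightarrow> 'k)" where
  "cone_chain w c = (\<lambda>\<sigma>. if w \<in> \<sigma> then insertion_sign (\<sigma> - {w}) w * c (\<sigma> - {w}) else 0)"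

locale isolated_vertex =
  fixes V :: "'a::linorder set" and E :: "'a \<Rightarrow> 'a \<Rightarrow> bool" and w :: 'a
  assumes finite_V: "finite V" and apex: "w \<in> V" and isolated: "\<forall>u\<in>V. \<not> E w u \<and> \<not> E u w"
begin

lemma insert_apex_Ind_iff: "insert w \<sigma> \<in> Ind V E \<longleftrightarrow> \<sigma> \<in> Ind V E"
  using apex isolated Ind_downward_closed[of "insert w \<sigma>" V E \<sigma>] unfolding Ind_def by auto

lemma bd_cone_chain_base:
  assumes "\<tau> \<in> Ind V E" "w \<notin> \<tau>"
  shows "bd V (Ind V E) (cone_chain w c) \<tau> = c \<tau>"
proof -
  have "bd V (Ind V E) (cone_chain w c) \<tau> = (\<Sum>u\<in>V - \<tau>. if u = w then c \<tau> else 0)"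
    unfolding bd_eq_insertion_sign using assms insert_apex_Ind_iff
    by (auto intro!: sum.cong simp: cone_chain_def mult.assoc[symmetric])
  also have "\<dots> = c \<tau>"
    using apex assms(2) finite_V by (simp add: sum.delta)
  finally show ?thesis .
qed

lemma bd_apex_free_face:
  fixes c :: "'a set \<Rightarrow> 'k::field"
  assumes \<rho>: "\<rho> \<in> Ind V E" "w \<notin> \<rho>"
  shows "bd V (Ind V E) c \<rho> = insertion_sign \<rho> w * c (insert w \<rho>)
           + (\<Sum>u\<in>V - insert w \<rho>. if insert u \<rho> \<in> Ind V E
                then insertion_sign \<rho> u * c (insert u \<rho>) else 0)"
proof -
  have V: "V - \<rho> = insert w (V - insert w \<rho>)"
    using apex \<rho>(2) by auto
  have "bd V (Ind V E) c \<rho> = (\<Sum>u\<in>V - \<rho>. if insert u \<rho> \<in> Ind V E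
                                  then insertion_sign \<rho> u * c (insert u \<rho>) else 0)"
    using \<rho>(1) by (simp add: bd_eq_insertion_sign)
  also have "\<dots> = insertion_sign \<rho> w * c (insert w \<rho>)
           + (\<Sum>u\<in>V - insert w \<rho>. if insert u \<rho> \<in> Ind V E
                then insertion_sign \<rho> u * c (insert u \<rho>) else 0)"
    unfolding V using finite_V \<rho> insert_apex_Ind_iff by (simp add: sum.insert)
  finally show ?thesis .
qed

lemma bd_cone_chain_apex_face:
  fixes c :: "'a set \<Rightarrow> 'k::field"
  assumes \<rho>: "\<rho> \<in> Ind V E" "w \<notin> \<rho>"
  shows "bd V (Ind V E) (cone_chain w c) (insert w \<rho>)
           = - insertion_sign \<rho> w * (\<Sum>u\<in>V - insert w \<rho>. if insert u \<rho> \<in> Ind V E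
                then insertion_sign \<rho> u * c (insert u \<rho>) else 0)"
proof -
  let ?\<Delta> = "Ind V E" and ?\<tau> = "insert w \<rho>"
  have fin: "finite \<rho>"
    using \<rho>(1) finite_V finite_face_Ind by blast
  have "bd V ?\<Delta> (cone_chain w c) ?\<tau>
      = (\<Sum>u\<in>V - ?\<tau>. if insert u \<rho> \<in> ?\<Delta>
           then - (insertion_sign \<rho> w * (insertion_sign \<rho> u * c (insert u \<rho>))) else 0)"
    unfolding bd_eq_insertion_sign
  proof (simp add: insert_apex_Ind_iff \<rho>(1), intro sum.cong refl)
    fix u assume u: "u \<in> V - ?\<tau>"
    have sign: "(insertion_sign ?\<tau> u :: 'k) * insertion_sign (insert u \<rho>) w
                  = - insertion_sign \<rho> w * insertion_sign \<rho> u"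
      using insertion_sign_insert[OF fin \<rho>(2), of u, where 'k='k]
        insertion_sign_insert[OF fin, of u w, where 'k='k] u
      by (cases "w < u") auto
    have "insert u ?\<tau> - {w} = insert u \<rho>" "insert u ?\<tau> \<in> ?\<Delta> \<longleftrightarrow> insert u \<rho> \<in> ?\<Delta>"
      using u \<rho>(2) insert_apex_Ind_iff[of "insert u \<rho>"] by (auto simp: insert_commute)
    then show "(if insert u ?\<tau> \<in> ?\<Delta> then insertion_sign ?\<tau> u * cone_chain w c (insert u ?\<tau>) else 0)
        = (if insert u \<rho> \<in> ?\<Delta>
           then - (insertion_sign \<rho> w * (insertion_sign \<rho> u * c (insert u \<rho>))) else 0)"
      using sign by (simp add: cone_chain_def mult.assoc[symmetric])
  qed
  also have "\<dots> = - insertion_sign \<rho> w * (\<Sum>u\<in>V - ?\<tau>. if insert u \<rho> \<in> ?\<Delta>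
                then insertion_sign \<rho> u * c (insert u \<rho>) else 0)"
    unfolding sum_distrib_left by (intro sum.cong refl) auto
  finally show ?thesis .
qed

lemma bd_cone_chain_apex:
  fixes c :: "'a set \<Rightarrow> 'k::field"
  assumes \<rho>: "\<rho> \<in> Ind V E" "w \<notin> \<rho>"
  shows "bd V (Ind V E) (cone_chain w c) (insert w \<rho>)
           = c (insert w \<rho>) - cone_chain w (bd V (Ind V E) c) (insert w \<rho>)"
  using bd_apex_free_face[OF \<rho>, of c] bd_cone_chain_apex_face[OF \<rho>, of c] \<rho>(2)
  by (simp add: cone_chain_def distrib_left mult.assoc[symmetric])

lemma bd_cone_chain:
  assumes "c \<in> supported_on (Ind V E)"
  shows "bd V (Ind V E) (cone_chain w c) = c - cone_chain w (bd V (Ind V E) c)"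
proof
  fix \<tau>
  show "bd V (Ind V E) (cone_chain w c) \<tau> = (c - cone_chain w (bd V (Ind V E) c)) \<tau>"
  proof (cases "\<tau> \<in> Ind V E")
    case False
    then have "\<tau> - {w} \<notin> Ind V E" if "w \<in> \<tau>"
      using that insert_apex_Ind_iff[of "\<tau> - {w}"] by (simp add: insert_absorb)
    then show ?thesis
      using False assms by (auto simp: bd_eq_insertion_sign cone_chain_def supported_on_def)
  next
    case True
    show ?thesis
    proof (cases "w \<in> \<tau>")
      case False
      then show ?thesis
        using True bd_cone_chain_base by (simp add: cone_chain_def)
    next
      case apex_in: True
      then have "\<tau> = insert w (\<tau> - {w})" "\<tau> - {w} \<in> Ind V E"
        using True Ind_downward_closed[of \<tau> V E "\<tau> - {w}"] by auto
      then show ?thesis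
        using bd_cone_chain_apex[of "\<tau> - {w}" c] by simp
    qed
  qed
qed

lemma cone_chain_chains:
  assumes "z \<in> chains K (Ind V E) k"
  shows "cone_chain w z \<in> chains K (Ind V E) (Suc k)"
  unfolding chains_def
proof (intro CollectI allI impI)
  fix \<sigma> assume "cone_chain w z \<sigma> \<noteq> 0"
  then have w: "w \<in> \<sigma>" and "z (\<sigma> - {w}) \<noteq> 0"
    by (auto simp: cone_chain_def split: if_splits)
  then have face: "\<sigma> - {w} \<in> Ind V E" "card (\<sigma> - {w}) = k"
    using assms unfolding chains_def by auto
  have "\<sigma> \<in> Ind V E"
    using face(1) w insert_apex_Ind_iff[of "\<sigma> - {w}"] by (simp add: insert_absorb)
  moreover have "finite \<sigma>"
    using \<open>\<sigma> \<in> Ind V E\<close> finite_V finite_face_Ind by blast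
  ultimately show "\<sigma> \<in> Ind V E \<and> card \<sigma> = Suc k"
    using face(2) w card_gt_0_iff[of \<sigma>] by auto
qed

lemma reduced_betti_eq_0: "reduced_betti K V (Ind V E) k = 0"
proof -
  have "cycles K V (Ind V E) k \<subseteq> boundaries K V (Ind V E) k"
  proof
    fix z assume "z \<in> cycles K V (Ind V E) k"
    then have z: "z \<in> chains K (Ind V E) k" "bd V (Ind V E) z = 0"
      by (auto simp: cycles_def)
    then have "bd V (Ind V E) (cone_chain w z) = z"
      using bd_cone_chain[of z] chains_supported_on by (fastforce simp: cone_chain_def)
    then show "z \<in> boundaries K V (Ind V E) k"
      unfolding boundaries_def using cone_chain_chains[OF z(1)] by (metis image_eqI)
  qed
  moreover have "boundaries K V (Ind V E) k \<subseteq> cs.span (face_indicator ` Ind V E)"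
    unfolding boundaries_def
    using subset_span_indicators[OF finite_Ind[OF finite_V]] bd_supported_on by blast
  ultimately have "cs.dim (cycles K V (Ind V E) k) \<le> cs.dim (boundaries K V (Ind V E) k)"
    using cs.dim_mono_finite_span finite_Ind[OF finite_V] by blast
  then show ?thesis
    unfolding reduced_betti_def by simp
qed

lemma btilde_eq_0: "btilde K V E = 0"
  by (simp add: btilde_def reduced_betti_eq_0)

end

section \<open>Deleting a vertex\<close>

definition closed_nbhd :: "('a \<Rightarrow> 'a \<Rightarrow> bool) \<Rightarrow> 'a \<Rightarrow> 'a set" where
  "closed_nbhd E v = insert v {u. E v u \<or> E u v}"

definition star_part :: "'a \<Rightarrow> ('a set \<Rightarrow> 'k::field) \<Rightarrow> ('a set \<Rightarrow> 'k)" where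
  "star_part v c = (\<lambda>\<sigma>. if v \<in> \<sigma> then c \<sigma> else 0)"

text \<open>\<open>link_chain v\<close> identifies the chains on faces containing \<open>v\<close>, modulo those avoiding \<open>v\<close>,
  with the chains of \<open>Ind (V - closed_nbhd E v)\<close> one degree lower; up to sign it commutes
  with the boundary (\<open>link_chain_bd\<close>).\<close>

definition link_chain :: "'a::linorder \<Rightarrow> ('a set \<Rightarrow> 'k::field) \<Rightarrow> ('a set \<Rightarrow> 'k)" where
  "link_chain v c = (\<lambda>\<rho>. if v \<notin> \<rho> then insertion_sign \<rho> v * c (insert v \<rho>) else 0)"

lemma linear_star_part:
  "Vector_Spaces.linear chain_scale chain_scale (star_part v :: ('a set \<Rightarrow> 'k::field) \<Rightarrow> _)"
  unfolding Vector_Spaces.linear_iff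
  by (auto simp: cs.vector_space_axioms star_part_def fun_eq_iff)

lemma linear_link_chain:
  "Vector_Spaces.linear chain_scale chain_scale (link_chain v :: ('a::linorder set \<Rightarrow> 'k::field) \<Rightarrow> _)"
  unfolding Vector_Spaces.linear_iff
  by (auto simp: cs.vector_space_axioms link_chain_def fun_eq_iff algebra_simps)

lemma linear_uminus_chain:
  "Vector_Spaces.linear chain_scale chain_scale (uminus :: ('a set \<Rightarrow> 'k::field) \<Rightarrow> _)"
  unfolding Vector_Spaces.linear_iff
  by (auto simp: cs.vector_space_axioms fun_eq_iff algebra_simps)

lemma star_part_chains: "star_part v ` chains K \<Delta> k \<subseteq> chains K \<Delta> k"
  unfolding chains_def star_part_def by (auto split: if_splits)

lemma star_part_supported_on: "x \<in> supported_on \<Delta> \<Longrightarrow> star_part v x \<in> supported_on \<Delta>"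
  unfolding supported_on_def star_part_def by (auto split: if_splits)

lemma link_chain_eq_0_imp:
  fixes x :: "'a::linorder set \<Rightarrow> 'k::field"
  assumes "\<And>\<sigma>. v \<notin> \<sigma> \<Longrightarrow> x \<sigma> = 0" and "link_chain v x = 0"
  shows "x = 0"
proof
  fix \<sigma>
  show "x \<sigma> = 0 \<sigma>"
  proof (cases "v \<in> \<sigma>")
    case True
    then have "link_chain v x (\<sigma> - {v}) = insertion_sign (\<sigma> - {v}) v * x \<sigma>"
      by (simp add: link_chain_def insert_absorb)
    then show ?thesis
      using assms(2) by simp
  qed (use assms in simp)
qed

lemma star_part_eq_0_iff: "star_part v a = 0 \<longleftrightarrow> (\<forall>\<sigma>. v \<in> \<sigma> \<longrightarrow> a \<sigma> = 0)"
  by (auto simp: star_part_def fun_eq_iff)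

lemma diff_diff_le_split:
  fixes a p r r' s s' t t' :: nat
  assumes "c = a + p" "s + t \<le> r" "s' + t' \<le> r'"
  shows "c - r - r' \<le> (a - s - s') + (p - t - t')"
  using assms by linarith

locale vertex_split =
  fixes V :: "'a::linorder set" and E :: "'a \<Rightarrow> 'a \<Rightarrow> bool" and v :: 'a
  assumes finite_V: "finite V" and vertex: "v \<in> V" and loopfree: "\<not> E v v"
begin

abbreviation V_del :: "'a set" where "V_del \<equiv> V - {v}"

abbreviation V_link :: "'a set" where "V_link \<equiv> V - closed_nbhd E v"

lemma Ind_del: "Ind V_del E = {\<sigma> \<in> Ind V E. v \<notin> \<sigma>}"
  unfolding Ind_def by auto

lemma Ind_link_subset: "Ind V_link E \<subseteq> Ind V E"
  by (rule Ind_mono) auto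

lemma vertex_notin_link_face: "\<rho> \<in> Ind V_link E \<Longrightarrow> v \<notin> \<rho>"
  unfolding Ind_def closed_nbhd_def by auto

lemma insert_vertex_Ind_iff: "v \<notin> \<rho> \<Longrightarrow> insert v \<rho> \<in> Ind V E \<longleftrightarrow> \<rho> \<in> Ind V_link E"
  using vertex loopfree unfolding Ind_def closed_nbhd_def by auto

lemma finite_link_face: "\<rho> \<in> Ind V_link E \<Longrightarrow> finite \<rho>"
  using finite_face_Ind[of V_link] finite_V by auto

lemma cofaces_insert_vertex:
  assumes "v \<notin> \<rho>"
  shows "{w \<in> V - insert v \<rho>. insert w (insert v \<rho>) \<in> Ind V E}
           = {w \<in> V_link - \<rho>. insert w \<rho> \<in> Ind V_link E}"
proof -
  have "insert w (insert v \<rho>) \<in> Ind V E \<longleftrightarrow> insert w \<rho> \<in> Ind V_link E" if "w \<noteq> v" for w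
    using insert_vertex_Ind_iff[of "insert w \<rho>"] that assms by (simp add: insert_commute)
  moreover have "w \<in> V_link" if "insert w \<rho> \<in> Ind V_link E" for w
    using that unfolding Ind_def by auto
  moreover have "w \<in> V \<and> w \<noteq> v" if "w \<in> V_link" for w
    using that unfolding closed_nbhd_def by auto
  ultimately show ?thesis
    by blast
qed

lemma chains_del: "chains K (Ind V_del E) k = {x \<in> chains K (Ind V E) k. star_part v x = 0}"
proof (intro set_eqI iffI)
  fix x assume "x \<in> chains K (Ind V_del E) k"
  then show "x \<in> {x \<in> chains K (Ind V E) k. star_part v x = 0}"
    unfolding chains_def star_part_def Ind_del by (auto simp: fun_eq_iff)
next
  fix x assume x: "x \<in> {x \<in> chains K (Ind V E) k. star_part v x = 0}"
  then have "v \<notin> \<sigma>" if "x \<sigma> \<noteq> 0" for \<sigma>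
    using that by (auto simp: star_part_eq_0_iff)
  then show "x \<in> chains K (Ind V_del E) k"
    using x unfolding chains_def Ind_del by auto
qed

lemma star_part_chains_0: "star_part v ` chains K (Ind V E) 0 \<subseteq> {0}"
proof
  fix x assume "x \<in> star_part v ` chains K (Ind V E) 0"
  then obtain c where c: "c \<in> chains K (Ind V E) 0" "x = star_part v c" by auto
  have "x \<sigma> = 0" for \<sigma>
  proof (cases "v \<in> \<sigma> \<and> c \<sigma> \<noteq> 0")
    case True
    then have "card \<sigma> = 0" "\<sigma> \<noteq> {}" "\<sigma> \<in> Ind V E"
      using c unfolding chains_def by auto
    then show ?thesis
      using finite_face_Ind[OF finite_V] by (metis card_0_eq)
  qed (use c in \<open>auto simp: star_part_def\<close>)
  then show "x \<in> {0}" by auto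
qed

lemma bd_del:
  fixes a :: "'a set \<Rightarrow> 'k::field"
  assumes a: "\<And>\<sigma>. v \<in> \<sigma> \<Longrightarrow> a \<sigma> = 0"
  shows "bd V (Ind V E) a = bd V_del (Ind V_del E) a"
proof
  fix \<tau>
  show "bd V (Ind V E) a \<tau> = bd V_del (Ind V_del E) a \<tau>"
  proof (cases "\<tau> \<in> Ind V E \<and> v \<notin> \<tau>")
    case True
    then have V: "V - \<tau> = insert v (V_del - \<tau>)"
      using vertex by auto
    have "bd V (Ind V E) a \<tau> = (\<Sum>u\<in>V_del - \<tau>. if insert u \<tau> \<in> Ind V E
                                   then insertion_sign \<tau> u * a (insert u \<tau>) else 0)"
      using True finite_V a by (simp add: bd_eq_insertion_sign V)
    also have "\<dots> = bd V_del (Ind V_del E) a \<tau>"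
    proof -
      have "\<tau> \<in> Ind V_del E"
        using True by (simp add: Ind_del)
      moreover have "insert u \<tau> \<in> Ind V_del E \<longleftrightarrow> insert u \<tau> \<in> Ind V E" if "u \<in> V_del - \<tau>" for u
        using that True by (auto simp: Ind_del)
      ultimately show ?thesis
        by (simp add: bd_eq_insertion_sign)
    qed
    finally show ?thesis .
  qed (use a in \<open>auto simp: bd_eq_insertion_sign Ind_del intro!: sum.neutral\<close>)
qed

lemma link_chain_bd_link_face:
  fixes c :: "'a set \<Rightarrow> 'k::field"
  assumes \<rho>: "\<rho> \<in> Ind V_link E"
  shows "link_chain v (bd V (Ind V E) c) \<rho> = - bd V_link (Ind V_link E) (link_chain v c) \<rho>"
proof -
  let ?W = "{w \<in> V_link - \<rho>. insert w \<rho> \<in> Ind V_link E}"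
  have v\<rho>: "v \<notin> \<rho>" and fin: "finite \<rho>"
    using \<rho> vertex_notin_link_face finite_link_face by auto
  have filter: "(\<Sum>w\<in>V - insert v \<rho>. if insert w (insert v \<rho>) \<in> Ind V E then f w else 0)
                 = (\<Sum>w\<in>?W. f w)" for f :: "'a \<Rightarrow> 'k"
    unfolding cofaces_insert_vertex[OF v\<rho>, symmetric]
    by (rule sum.inter_filter[symmetric]) (simp add: finite_V)
  have "link_chain v (bd V (Ind V E) c) \<rho>
      = insertion_sign \<rho> v * (\<Sum>w\<in>V - insert v \<rho>. if insert w (insert v \<rho>) \<in> Ind V E
           then insertion_sign (insert v \<rho>) w * c (insert w (insert v \<rho>)) else 0)"
    using v\<rho> \<rho> insert_vertex_Ind_iff by (simp add: link_chain_def bd_eq_insertion_sign)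
  also have "\<dots> = (\<Sum>w\<in>?W. insertion_sign \<rho> v
                     * (insertion_sign (insert v \<rho>) w * c (insert w (insert v \<rho>))))"
    by (simp only: filter sum_distrib_left)
  also have "\<dots> = (\<Sum>w\<in>?W. - (insertion_sign \<rho> w * link_chain v c (insert w \<rho>)))"
  proof (intro sum.cong refl)
    fix w assume "w \<in> ?W"
    then have w: "w \<noteq> v" "w \<notin> \<rho>"
      unfolding closed_nbhd_def by auto
    have "(insertion_sign \<rho> v :: 'k) * insertion_sign (insert v \<rho>) w
            = - (insertion_sign \<rho> w * insertion_sign (insert w \<rho>) v)"
      using insertion_sign_insert[OF fin v\<rho>, of w, where 'k='k]
        insertion_sign_insert[OF fin w(2), of v, where 'k='k] w(1)
      by (cases "v < w") auto
    then show "insertion_sign \<rho> v * (insertion_sign (insert v \<rho>) w * c (insert w (insert v \<rho>)))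
        = - (insertion_sign \<rho> w * link_chain v c (insert w \<rho>))"
      using w v\<rho> by (simp add: link_chain_def insert_commute mult.assoc[symmetric])
  qed
  also have "\<dots> = - (\<Sum>w\<in>V_link - \<rho>. if insert w \<rho> \<in> Ind V_link E
                         then insertion_sign \<rho> w * link_chain v c (insert w \<rho>) else 0)"
    by (simp only: sum_negf sum.inter_filter[OF finite_Diff[OF finite_Diff[OF finite_V]]])
  also have "\<dots> = - bd V_link (Ind V_link E) (link_chain v c) \<rho>"
    using \<rho> by (simp add: bd_eq_insertion_sign)
  finally show ?thesis .
qed

lemma link_chain_bd:
  "link_chain v (star_part v (bd V (Ind V E) c)) = - bd V_link (Ind V_link E) (link_chain v c)"
proof
  fix \<rho>
  show "link_chain v (star_part v (bd V (Ind V E) c)) \<rho> = (- bd V_link (Ind V_link E) (link_chain v c)) \<rho>"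
  proof (cases "\<rho> \<in> Ind V_link E")
    case True
    then show ?thesis
      using link_chain_bd_link_face[OF True] vertex_notin_link_face
      by (simp add: link_chain_def star_part_def)
  next
    case False
    then show ?thesis
      using insert_vertex_Ind_iff[of \<rho>] by (simp add: link_chain_def star_part_def bd_eq_insertion_sign)
  qed
qed

lemma cone_chain_link_chains:
  assumes "d \<in> chains K (Ind V_link E) k"
  shows "cone_chain v d \<in> chains K (Ind V E) (Suc k)"
  unfolding chains_def
proof (intro CollectI allI impI)
  fix \<sigma> assume "cone_chain v d \<sigma> \<noteq> 0"
  then have v: "v \<in> \<sigma>" and "d (\<sigma> - {v}) \<noteq> 0"
    by (auto simp: cone_chain_def split: if_splits)
  then have face: "\<sigma> - {v} \<in> Ind V_link E" "card (\<sigma> - {v}) = k"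
    using assms unfolding chains_def by auto
  then show "\<sigma> \<in> Ind V E \<and> card \<sigma> = Suc k"
    using insert_vertex_Ind_iff[of "\<sigma> - {v}"] finite_link_face[OF face(1)] v
      card_gt_0_iff[of \<sigma>]
    by (auto simp: insert_absorb)
qed

lemma link_chain_cone_chain:
  assumes "d \<in> chains K (Ind V_link E) k"
  shows "link_chain v (cone_chain v d) = d"
proof
  fix \<rho>
  show "link_chain v (cone_chain v d) \<rho> = d \<rho>"
    using assms vertex_notin_link_face unfolding chains_def
    by (auto simp: link_chain_def cone_chain_def mult.assoc[symmetric])
qed

lemma link_chain_star_part_chains:
  "link_chain v ` star_part v ` chains K (Ind V E) (Suc k) = chains K (Ind V_link E) k"
proof (intro set_eqI iffI)
  fix d assume "d \<in> link_chain v ` star_part v ` chains K (Ind V E) (Suc k)"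
  then obtain c where c: "c \<in> chains K (Ind V E) (Suc k)" "d = link_chain v (star_part v c)"
    by auto
  show "d \<in> chains K (Ind V_link E) k"
    unfolding chains_def
  proof (intro CollectI allI impI)
    fix \<rho> assume "d \<rho> \<noteq> 0"
    then have v\<rho>: "v \<notin> \<rho>" and "c (insert v \<rho>) \<noteq> 0"
      using c(2) by (auto simp: link_chain_def star_part_def split: if_splits)
    then have "insert v \<rho> \<in> Ind V E" "card (insert v \<rho>) = Suc k"
      using c(1) unfolding chains_def by auto
    then show "\<rho> \<in> Ind V_link E \<and> card \<rho> = k"
      using insert_vertex_Ind_iff[OF v\<rho>] finite_link_face v\<rho> by auto
  qed
next
  fix d assume d: "d \<in> chains K (Ind V_link E) k"
  have "star_part v (cone_chain v d) = cone_chain v d"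
    by (auto simp: star_part_def cone_chain_def)
  then show "d \<in> link_chain v ` star_part v ` chains K (Ind V E) (Suc k)"
    using cone_chain_link_chains[OF d] link_chain_cone_chain[OF d] by (metis image_eqI)
qed

lemma finite_face_indicators: "finite (face_indicator ` Ind V E :: ('a set \<Rightarrow> 'k::field) set)"
  using finite_Ind[OF finite_V] by simp

lemma span_face_indicators:
  "S \<subseteq> supported_on (Ind V E) \<Longrightarrow> S \<subseteq> cs.span (face_indicator ` Ind V E)"
  by (rule subset_span_indicators[OF finite_Ind[OF finite_V]])

lemma dim_chains_split:
  "cs.dim (chains K (Ind V E) k)
     = cs.dim (chains K (Ind V_del E) k) + cs.dim (star_part v ` chains K (Ind V E) k)"
  using cs.rank_nullity_finite_span[OF linear_star_part[of v] subspace_chains[of K "Ind V E" k]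
      finite_face_indicators span_face_indicators[OF chains_supported_on]]
  by (simp add: chains_del)

lemma bd_chains_del_subset:
  "bd V_del (Ind V_del E) ` chains K (Ind V_del E) k
     \<subseteq> {x \<in> bd V (Ind V E) ` chains K (Ind V E) k. star_part v x = 0}"
proof
  fix y assume "y \<in> bd V_del (Ind V_del E) ` chains K (Ind V_del E) k"
  then obtain a where a: "a \<in> chains K (Ind V_del E) k" "y = bd V_del (Ind V_del E) a"
    by blast
  then have a': "a \<in> chains K (Ind V E) k" "star_part v a = 0"
    unfolding chains_del by blast+
  then have "y = bd V (Ind V E) a"
    using a(2) bd_del[of a] unfolding star_part_eq_0_iff by simp
  then have "y \<in> bd V (Ind V E) ` chains K (Ind V E) k"
    using a'(1) by blast
  moreover have "star_part v y = 0"
    using bd_supported_on[of V_del "Ind V_del E" a] a(2)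
    unfolding star_part_eq_0_iff supported_on_def Ind_del by blast
  ultimately show "y \<in> {x \<in> bd V (Ind V E) ` chains K (Ind V E) k. star_part v x = 0}"
    by blast
qed

lemma dim_bd_chains_split:
  "cs.dim (bd V_del (Ind V_del E) ` chains K (Ind V_del E) k)
     + cs.dim (star_part v ` bd V (Ind V E) ` star_part v ` chains K (Ind V E) k)
   \<le> cs.dim (bd V (Ind V E) ` chains K (Ind V E) k)"
proof -
  let ?B = "bd V (Ind V E) ` chains K (Ind V E) k"
  have B: "cs.subspace ?B" "?B \<subseteq> supported_on (Ind V E)"
    by (rule subspace_linear_image[OF linear_bd subspace_chains])
      (rule image_subsetI, rule bd_supported_on)
  have "bd V_del (Ind V_del E) ` chains K (Ind V_del E) k \<subseteq> {x \<in> ?B. star_part v x = 0}"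
    by (rule bd_chains_del_subset)
  then have "cs.dim (bd V_del (Ind V_del E) ` chains K (Ind V_del E) k)
               \<le> cs.dim {x \<in> ?B. star_part v x = 0}"
    by (rule cs.dim_mono_finite_span[OF _ finite_face_indicators span_face_indicators])
      (use B(2) in auto)
  moreover have "cs.dim (star_part v ` bd V (Ind V E) ` star_part v ` chains K (Ind V E) k)
                   \<le> cs.dim (star_part v ` ?B)"
  proof (rule cs.dim_mono_finite_span[OF _ finite_face_indicators span_face_indicators])
    show "star_part v ` bd V (Ind V E) ` star_part v ` chains K (Ind V E) k \<subseteq> star_part v ` ?B"
      by (intro image_mono star_part_chains)
    show "star_part v ` ?B \<subseteq> supported_on (Ind V E)"
      using B(2) by (auto intro: star_part_supported_on)
  qed
  ultimately show ?thesis
    using cs.rank_nullity_finite_span[OF linear_star_part[of v] B(1) finite_face_indicators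
        span_face_indicators[OF B(2)]] by linarith
qed

lemma dim_star_part_chains:
  "cs.dim (star_part v ` chains K (Ind V E) (Suc k)) = cs.dim (chains K (Ind V_link E) k)"
proof -
  let ?R = "star_part v ` chains K (Ind V E) (Suc k)"
  have R: "cs.subspace ?R" "?R \<subseteq> supported_on (Ind V E)"
    by (rule subspace_linear_image[OF linear_star_part subspace_chains])
      (rule subset_trans[OF star_part_chains chains_supported_on])
  have "cs.dim (link_chain v ` ?R) = cs.dim ?R"
  proof (rule cs.dim_inj_image_finite_span[OF linear_link_chain R(1) finite_face_indicators
        span_face_indicators[OF R(2)]])
    fix x assume "x \<in> ?R" "link_chain v x = 0"
    then show "x = 0"
      by (auto simp: star_part_def intro: link_chain_eq_0_imp)
  qed
  then show ?thesis
    by (simp add: link_chain_star_part_chains)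
qed

lemma dim_star_part_bd_star_part_chains:
  "cs.dim (star_part v ` bd V (Ind V E) ` star_part v ` chains K (Ind V E) (Suc k))
     = cs.dim (bd V_link (Ind V_link E) ` chains K (Ind V_link E) k)"
proof -
  let ?R = "star_part v ` chains K (Ind V E) (Suc k)"
  let ?T = "star_part v ` bd V (Ind V E) ` ?R"
  let ?U = "bd V_link (Ind V_link E) ` chains K (Ind V_link E) k"
  have T: "cs.subspace ?T" "?T \<subseteq> supported_on (Ind V E)"
    using subspace_linear_image[OF linear_star_part subspace_linear_image[OF linear_bd
          subspace_linear_image[OF linear_star_part subspace_chains]]]
    by (auto intro: star_part_supported_on[OF bd_supported_on])
  have U: "cs.subspace ?U" "?U \<subseteq> supported_on (Ind V E)"
    by (rule subspace_linear_image[OF linear_bd subspace_chains])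
      (rule subset_trans[OF image_subsetI[OF bd_supported_on] supported_on_mono[OF Ind_link_subset]])
  have "link_chain v ` ?T = (\<lambda>c. link_chain v (star_part v (bd V (Ind V E) c))) ` ?R"
    by (simp add: image_image)
  also have "\<dots> = uminus ` bd V_link (Ind V_link E) ` link_chain v ` ?R"
    by (simp add: link_chain_bd image_image)
  also have "\<dots> = uminus ` ?U"
    by (simp only: link_chain_star_part_chains)
  finally have image: "link_chain v ` ?T = uminus ` ?U" .
  have "cs.dim (link_chain v ` ?T) = cs.dim ?T"
  proof (rule cs.dim_inj_image_finite_span[OF linear_link_chain T(1) finite_face_indicators
        span_face_indicators[OF T(2)]])
    fix x assume "x \<in> ?T" "link_chain v x = 0"
    then show "x = 0"
      by (auto simp: star_part_def intro: link_chain_eq_0_imp)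
  qed
  moreover have "cs.dim (uminus ` ?U) = cs.dim ?U"
    by (rule cs.dim_inj_image_finite_span[OF linear_uminus_chain U(1) finite_face_indicators
          span_face_indicators[OF U(2)]]) simp
  ultimately show ?thesis
    using image by simp
qed

text \<open>The dimension count behind the long exact sequence of the pair
  \<open>(Ind V, Ind (V - {v}))\<close>, whose quotient is \<open>Ind (V - closed_nbhd E v)\<close> shifted by one.\<close>

lemma reduced_betti_split:
  "reduced_betti K V (Ind V E) k
     \<le> reduced_betti K V_del (Ind V_del E) k
       + (case k of 0 \<Rightarrow> 0 | Suc j \<Rightarrow> reduced_betti K V_link (Ind V_link E) j)"
proof -
  have "finite (Ind V E)" "finite (Ind V_del E)" "finite (Ind V_link E)"
    using finite_V by (simp_all add: finite_Ind)
  note betti = reduced_betti_eq[OF this(1)] reduced_betti_eq[OF this(2)] reduced_betti_eq[OF this(3)]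
  have split: "reduced_betti K V (Ind V E) k \<le> reduced_betti K V_del (Ind V_del E) k
      + (cs.dim (star_part v ` chains K (Ind V E) k)
         - cs.dim (star_part v ` bd V (Ind V E) ` star_part v ` chains K (Ind V E) k)
         - cs.dim (star_part v ` bd V (Ind V E) ` star_part v ` chains K (Ind V E) (Suc k)))"
    unfolding betti
    by (rule diff_diff_le_split[OF dim_chains_split dim_bd_chains_split dim_bd_chains_split])
  show ?thesis
  proof (cases k)
    case 0
    then show ?thesis
      using split cs.dim_subset_zero[OF star_part_chains_0[where K=K]] by simp
  next
    case (Suc j)
    show ?thesis
      using split unfolding Suc dim_star_part_chains dim_star_part_bd_star_part_chains betti by simp
  qed
qed

lemma btilde_split: "btilde K V E \<le> btilde K V_del E + btilde K V_link E"
proof -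
  obtain m where m: "card V = Suc m"
    using vertex finite_V by (metis card_Suc_Diff1)
  have card_del: "card V_del = m"
    using m vertex finite_V by simp
  have card_link: "card V_link \<le> m"
    unfolding card_del[symmetric] by (rule card_mono) (use finite_V in \<open>auto simp: closed_nbhd_def\<close>)
  have "btilde K V E \<le> (\<Sum>k\<le>card V. reduced_betti K V_del (Ind V_del E) k
        + (case k of 0 \<Rightarrow> 0 | Suc j \<Rightarrow> reduced_betti K V_link (Ind V_link E) j))"
    unfolding btilde_def by (intro sum_mono reduced_betti_split)
  also have "\<dots> = (\<Sum>k\<le>card V. reduced_betti K V_del (Ind V_del E) k)
      + (\<Sum>k\<le>card V. case k of 0 \<Rightarrow> 0 | Suc j \<Rightarrow> reduced_betti K V_link (Ind V_link E) j)"
    by (rule sum.distrib)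
  also have "(\<Sum>k\<le>card V. case k of 0 \<Rightarrow> 0 | Suc j \<Rightarrow> reduced_betti K V_link (Ind V_link E) j)
      = (\<Sum>j\<le>m. reduced_betti K V_link (Ind V_link E) j)"
    unfolding m sum.atMost_Suc_shift by simp
  also have "(\<Sum>k\<le>card V. reduced_betti K V_del (Ind V_del E) k) = btilde K V_del E"
    by (rule btilde_eq_sum[symmetric]) (simp_all add: finite_V m card_del)
  also have "(\<Sum>j\<le>m. reduced_betti K V_link (Ind V_link E) j) = btilde K V_link E"
    by (rule btilde_eq_sum[symmetric]) (simp_all add: finite_V card_link)
  finally show ?thesis .
qed

end

section \<open>Squares of paths\<close>

definition path_sq_adj :: "nat \<Rightarrow> nat \<Rightarrow> bool" where
  "path_sq_adj i j \<longleftrightarrow> i \<noteq> j \<and> i \<le> j + 2 \<and> j \<le> i + 2"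

fun path_sq_bound :: "nat \<Rightarrow> nat" where
  "path_sq_bound 0 = 1"
| "path_sq_bound (Suc 0) = 0"
| "path_sq_bound (Suc (Suc 0)) = 1"
| "path_sq_bound (Suc (Suc (Suc n))) = path_sq_bound (n - 1) + path_sq_bound (n - 2)"

text \<open>This is \<open>g m = g (m - 4) + g (m - 5)\<close> for \<open>m \<ge> 3\<close> with truncated subtraction, so
  \<open>path_sq_bound 3 = path_sq_bound 4 = 2\<close>.\<close>

lemma path_sq_bound_rec:
  assumes "m \<ge> 3"
  shows "path_sq_bound m = path_sq_bound (m - 4) + path_sq_bound (m - 5)"
proof -
  have "\<exists>n. m = Suc (Suc (Suc n))"
    using assms by presburger
  then obtain n where m: "m = Suc (Suc (Suc n))" ..
  have "Suc (Suc (Suc n)) - 4 = n - 1" "Suc (Suc (Suc n)) - 5 = n - 2"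
    by arith+
  then show ?thesis
    unfolding m by simp
qed

lemma path_sq_link_second: "{a..<a+m} - closed_nbhd path_sq_adj (a+1) = {a+4..<(a+4)+(m-4)}"
  by (auto simp: closed_nbhd_def path_sq_adj_def)

lemma btilde_path_sq_del_second:
  assumes "m \<ge> 3"
  shows "btilde K ({a..<a+m} - {a+1}) path_sq_adj \<le> btilde K {a+5..<(a+5)+(m-5)} path_sq_adj"
proof -
  let ?V = "{a..<a+m} - {a+1}"
  have "btilde K ?V path_sq_adj
          \<le> btilde K (?V - {a+2}) path_sq_adj + btilde K (?V - closed_nbhd path_sq_adj (a+2)) path_sq_adj"
    by (intro vertex_split.btilde_split vertex_split.intro) (use assms in \<open>auto simp: path_sq_adj_def\<close>)
  moreover have "btilde K (?V - {a+2}) path_sq_adj = 0"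
    by (intro isolated_vertex.btilde_eq_0[of _ _ a] isolated_vertex.intro)
      (use assms in \<open>auto simp: path_sq_adj_def\<close>)
  moreover have "?V - closed_nbhd path_sq_adj (a+2) = {a+5..<(a+5)+(m-5)}"
    by (auto simp: closed_nbhd_def path_sq_adj_def)
  ultimately show ?thesis
    by simp
qed

lemma btilde_path_sq_le_bound: "btilde K {a..<a+m} path_sq_adj \<le> path_sq_bound m"
proof (induction m arbitrary: a rule: less_induct)
  case (less m)
  consider "m = 0" | "m = 1" | "m \<ge> 2"
    by linarith
  then show ?case
  proof cases
    case 1
    then show ?thesis
      using btilde_empty_le[of K path_sq_adj] by simp
  next
    case 2
    have "btilde K {a..<a+m} path_sq_adj = 0"
      by (intro isolated_vertex.btilde_eq_0 isolated_vertex.intro) (use 2 in \<open>auto simp: path_sq_adj_def\<close>)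
    then show ?thesis
      by simp
  next
    case 3
    let ?V = "{a..<a+m}"
    have "btilde K ?V path_sq_adj
            \<le> btilde K (?V - {a+1}) path_sq_adj + btilde K (?V - closed_nbhd path_sq_adj (a+1)) path_sq_adj"
      by (intro vertex_split.btilde_split vertex_split.intro) (use 3 in \<open>auto simp: path_sq_adj_def\<close>)
    moreover have "btilde K {a+4..<(a+4)+(m-4)} path_sq_adj \<le> path_sq_bound (m - 4)"
      using less.IH 3 by simp
    moreover have "btilde K (?V - {a+1}) path_sq_adj \<le> (if m = 2 then 0 else path_sq_bound (m - 5))"
    proof (cases "m = 2")
      case True
      then show ?thesis
        using isolated_vertex.btilde_eq_0[of "?V - {a+1}" path_sq_adj a K]
        by (simp add: isolated_vertex_def path_sq_adj_def)
    next
      case False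
      then show ?thesis
        using btilde_path_sq_del_second[of m K a] less.IH[of "m - 5" "a+5"] 3 by simp
    qed
    moreover have "path_sq_bound m = path_sq_bound (m - 4) + (if m = 2 then 0 else path_sq_bound (m - 5))"
      using path_sq_bound_rec[of m] 3 by (cases "m = 2") (simp_all add: numeral_2_eq_2)
    ultimately show ?thesis
      unfolding path_sq_link_second by linarith
  qed
qed

lemma path_sq_bound_small:
  "path_sq_bound 4 = 2" "path_sq_bound 5 = 1" "path_sq_bound 6 = 1" "path_sq_bound 7 = 3"
  "path_sq_bound 8 = 4"
  by (simp_all add: path_sq_bound_rec numeral_2_eq_2 numeral_3_eq_3)

lemma three_le_two_powr_7_4: "(3::real) \<le> 2 powr (7/4)"
proof -
  have "(3::real) ^ 4 \<le> 2 ^ 7"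
    by simp
  also have "(2::real) ^ 7 = (2 powr (7/4)) ^ 4"
    by (simp add: powr_realpow[symmetric] powr_powr)
  finally show ?thesis
    using power_le_imp_le_base[of "3::real" 3 "2 powr (7/4)"] by simp
qed

lemma path_sq_bound_le_powr: "m \<ge> 4 \<Longrightarrow> real (path_sq_bound m) \<le> 2 powr (real m / 4)"
proof (induction m rule: less_induct)
  case (less m)
  show ?case
  proof (cases "m \<le> 8")
    case True
    have "real m / 4 \<ge> 1"
      using less.prems by simp
    then have two: "2 \<le> (2::real) powr (real m / 4)"
      using powr_mono[of 1 "real m / 4" 2] by simp
    have four: "(2::real) powr (8 / 4) = 4"
      using powr_realpow[of 2 2] by simp
    consider "m = 4" | "m = 5" | "m = 6" | "m = 7" | "m = 8"
      using True less.prems by linarith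
    then show ?thesis
      using two three_le_two_powr_7_4 four by cases (simp_all add: path_sq_bound_small)
  next
    case False
    have IH: "real (path_sq_bound j) \<le> 2 powr (real (m - 4) / 4)" if "j \<in> {m - 5, m - 4}" for j
    proof -
      have "real (path_sq_bound j) \<le> 2 powr (real j / 4)"
        using less.IH[of j] that False by auto
      also have "\<dots> \<le> 2 powr (real (m - 4) / 4)"
        using that by (intro powr_mono) auto
      finally show ?thesis .
    qed
    have "real (path_sq_bound m) \<le> 2 * 2 powr (real (m - 4) / 4)"
      using path_sq_bound_rec[of m] IH[of "m - 4"] IH[of "m - 5"] False by simp
    also have "\<dots> = 2 powr (1 + real (m - 4) / 4)"
      by (simp add: powr_add)
    also have "1 + real (m - 4) / 4 = real m / 4"
      using False by (simp add: of_nat_diff field_simps)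
    finally show ?thesis .
  qed
qed

section \<open>The triangular cycle\<close>

lemma TC_adj_iff:
  assumes "n \<ge> 5" "i \<in> {1..n}" "j \<in> {1..n}"
  shows "TC_adj n i j \<longleftrightarrow> i \<noteq> j \<and> (i \<le> j + 2 \<and> j \<le> i + 2 \<or> i + n \<le> j + 2 \<or> j + n \<le> i + 2)"
proof -
  have "(int i - int j) mod int n = (if j \<le> i then int i - int j else int i - int j + int n)"
  proof (cases "j \<le> i")
    case True
    then show ?thesis
      using assms by (simp add: mod_pos_pos_trivial)
  next
    case False
    have "(int i - int j) mod int n = (int i - int j + int n) mod int n"
      by simp
    also have "\<dots> = int i - int j + int n"
      using False assms by (intro mod_pos_pos_trivial) auto
    finally show ?thesis
      using False by simp
  qed
  then show ?thesis
    unfolding TC_adj_def using assms by auto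
qed

lemma btilde_TC_interval_le:
  assumes "n \<ge> 5" "1 \<le> b" "b + m \<le> n" "m + 2 \<le> n"
  shows "btilde K {b..<b+m} (TC_adj n) \<le> path_sq_bound m"
proof -
  have "btilde K {b..<b+m} (TC_adj n) = btilde K {b..<b+m} path_sq_adj"
  proof (rule btilde_cong)
    fix x y assume "x \<in> {b..<b+m}" "y \<in> {b..<b+m}"
    then show "TC_adj n x y = path_sq_adj x y"
      using TC_adj_iff[OF assms(1), of x y] assms by (auto simp: path_sq_adj_def)
  qed
  then show ?thesis
    using btilde_path_sq_le_bound by simp
qed

lemma TC_link_last:
  assumes n: "n \<ge> 5"
  shows "{1..n} - closed_nbhd (TC_adj n) n = {3..<3+(n-5)}"
proof (intro set_eqI)
  fix x
  show "x \<in> {1..n} - closed_nbhd (TC_adj n) n \<longleftrightarrow> x \<in> {3..<3+(n-5)}"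
    using TC_adj_iff[OF n, of x n] TC_adj_iff[OF n, of n x] n
    by (cases "x \<in> {1..n}") (auto simp: closed_nbhd_def)
qed

lemma TC_del_last_link_first:
  assumes n: "n \<ge> 5"
  shows "{1..n} - {n} - closed_nbhd (TC_adj n) 1 = {4..<4+(n-5)}"
proof (intro set_eqI)
  fix x
  show "x \<in> {1..n} - {n} - closed_nbhd (TC_adj n) 1 \<longleftrightarrow> x \<in> {4..<4+(n-5)}"
    using TC_adj_iff[OF n, of x 1] TC_adj_iff[OF n, of 1 x] n
    by (cases "x \<in> {1..n}") (auto simp: closed_nbhd_def)
qed

lemma btilde_TC_le:
  assumes n: "n \<ge> 5"
  shows "btilde K {1..n} (TC_adj n) \<le> path_sq_bound (n - 2) + 2 * path_sq_bound (n - 5)"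
proof -
  have loopfree: "\<not> TC_adj n i i" for i
    by (simp add: TC_adj_def)
  have del_first: "{1..n} - {n} - {1} = {2..<2+(n-2)}"
    using n by auto
  have "btilde K {1..n} (TC_adj n)
          \<le> btilde K ({1..n} - {n}) (TC_adj n) + btilde K ({1..n} - closed_nbhd (TC_adj n) n) (TC_adj n)"
    by (intro vertex_split.btilde_split vertex_split.intro) (use n loopfree in auto)
  moreover have "btilde K ({1..n} - {n}) (TC_adj n)
          \<le> btilde K ({1..n} - {n} - {1}) (TC_adj n)
            + btilde K ({1..n} - {n} - closed_nbhd (TC_adj n) 1) (TC_adj n)"
    by (intro vertex_split.btilde_split vertex_split.intro) (use n loopfree in auto)
  moreover have "btilde K {2..<2+(n-2)} (TC_adj n) \<le> path_sq_bound (n - 2)"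
    by (rule btilde_TC_interval_le) (use n in auto)
  moreover have "btilde K {3..<3+(n-5)} (TC_adj n) \<le> path_sq_bound (n - 5)"
    by (rule btilde_TC_interval_le) (use n in auto)
  moreover have "btilde K {4..<4+(n-5)} (TC_adj n) \<le> path_sq_bound (n - 5)"
    by (rule btilde_TC_interval_le) (use n in auto)
  ultimately show ?thesis
    unfolding TC_link_last[OF n] TC_del_last_link_first[OF n] del_first by linarith
qed

lemma path_sq_bound_TC_le:
  assumes "n \<ge> 9"
  shows "real (path_sq_bound (n - 2) + 2 * path_sq_bound (n - 5))
           \<le> 2 powr (real n / 4) * (2 powr (-1/2) + 2 powr (-1/4))"
proof -
  have shift2: "2 powr (real (n - 2) / 4) = 2 powr (real n / 4) * 2 powr (-1/2)"
  proof -
    have "real (n - 2) / 4 = real n / 4 + (-1/2)"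
      using assms by (simp add: of_nat_diff field_simps)
    then show ?thesis
      by (simp only: powr_add)
  qed
  have shift5: "2 * 2 powr (real (n - 5) / 4) = 2 powr (real n / 4) * 2 powr (-1/4)"
  proof -
    have "1 + real (n - 5) / 4 = real n / 4 + (-1/4)"
      using assms by (simp add: of_nat_diff field_simps)
    then have "2 powr (1 + real (n - 5) / 4) = 2 powr (real n / 4) * 2 powr (-1/4)"
      by (simp only: powr_add)
    then show ?thesis
      by (simp add: powr_add)
  qed
  have "real (path_sq_bound (n - 2)) \<le> 2 powr (real (n - 2) / 4)"
    "real (path_sq_bound (n - 5)) \<le> 2 powr (real (n - 5) / 4)"
    using assms by (intro path_sq_bound_le_powr; simp)+
  then have "real (path_sq_bound (n - 2) + 2 * path_sq_bound (n - 5))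
               \<le> 2 powr (real (n - 2) / 4) + 2 * 2 powr (real (n - 5) / 4)"
    by simp
  also have "\<dots> = 2 powr (real n / 4) * (2 powr (-1/2) + 2 powr (-1/4))"
    unfolding shift2 shift5 by (simp add: distrib_left)
  finally show ?thesis .
qed

theorem lemmaA21:
  fixes n :: nat
  assumes "n \<ge> 9"
  shows "real (btilde TYPE('k::field) {1..n} (TC_adj n))
           \<le> 2 powr (real n / 4) * (2 powr (-1/2) + 2 powr (-1/4))"
proof -
  have "btilde TYPE('k) {1..n} (TC_adj n) \<le> path_sq_bound (n - 2) + 2 * path_sq_bound (n - 5)"
    using assms by (intro btilde_TC_le) simp
  then have "real (btilde TYPE('k) {1..n} (TC_adj n))
               \<le> real (path_sq_bound (n - 2) + 2 * path_sq_bound (n - 5))"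
    by (simp only: of_nat_le_iff)
  also have "\<dots> \<le> 2 powr (real n / 4) * (2 powr (-1/2) + 2 powr (-1/4))"
    by (rule path_sq_bound_TC_le[OF assms])
  finally show ?thesis .
qed

end
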